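(* Every nonzero element $a$ of a finite additive poset $A$ can be written as a sum of pairwise independent atoms of $A$. Moreover, in any such expansion of $a$, all the atoms lie in the tail $A_a$ of $a$.
   Context: An additive poset is a pair $(A,\le)$ where $A$ is an abelian group and $\le$ is a partial order on $A$ such that for all $a,b,c\in A$: $(\ast)$ if $b\le a$ and $c\le a$ then $b+c\le a$; $(\ast\ast)$ if $a\le b$ and $a\le c$ then $a\le a+b+c$. The tail of $a$ is $A_a=\{x:x\le a\}$. Elements $x,y$ are independent if $x\le x+y$. An atom is a nonzero $x$ with $A_x=\{0,x\}$. *)

theory Defs
  imports Main
begin

definition additive_poset :: "('a::ab_group_add \<Rightarrow> 'a \<Rightarrow> bool) \<Rightarrow> bool" where
  "additive_poset le \<longleftrightarrow>
     (\<forall>x. le x x) \<and>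
     (\<forall>x y. le x y \<and> le y x \<longrightarrow> x = y) \<and>
     (\<forall>x y z. le x y \<and> le y z \<longrightarrow> le x z) \<and>
     (\<forall>a b c. le b a \<and> le c a \<longrightarrow> le (b + c) a) \<and>
     (\<forall>a b c. le a b \<and> le a c \<longrightarrow> le a (a + b + c))"

definition tail :: "('a \<Rightarrow> 'a \<Rightarrow> bool) \<Rightarrow> 'a \<Rightarrow> 'a set" where
  "tail le a = {x. le x a}"

definition independent :: "('a::ab_group_add \<Rightarrow> 'a \<Rightarrow> bool) \<Rightarrow> 'a \<Rightarrow> 'a \<Rightarrow> bool" where
  "independent le x y \<longleftrightarrow> le x (x + y)"

definition atom :: "('a::ab_group_add \<Rightarrow> 'a \<Rightarrow> bool) \<Rightarrow> 'a \<Rightarrow> bool" where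
  "atom le x \<longleftrightarrow> x \<noteq> 0 \<and> tail le x = {0, x}"

definition atom_expansion :: "('a::ab_group_add \<Rightarrow> 'a \<Rightarrow> bool) \<Rightarrow> 'a list \<Rightarrow> 'a \<Rightarrow> bool" where
  "atom_expansion le xs a \<longleftrightarrow>
     sum_list xs = a \<and>
     (\<forall>x\<in>set xs. atom le x) \<and>
     (\<forall>i<length xs. \<forall>j<length xs. i \<noteq> j \<longrightarrow> independent le (xs ! i) (xs ! j))"

end

theory Submission
  imports Defs
begin

text \<open>In a finite group every a has finite order, so -a is a sum of copies of a and
  -a \<le> a because tails are closed under addition; with a \<le> -a this gives a = -a. Hence
  0 lies below everything, and independence is symmetric and inherited by smaller elements.
  A non-atom a splits as a = b + (a + b) with 0 \<noteq> b < a; since b \<le> a the two halves are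
  independent, so expansions of the halves, obtained by induction on the size of the tail,
  concatenate to an expansion of a. Conversely each atom of an expansion is independent of
  the sum of the others, which says exactly that it lies below a.\<close>

locale additive_order =
  fixes le :: "'a::ab_group_add \<Rightarrow> 'a \<Rightarrow> bool"
  assumes additive_poset: "additive_poset le"
begin

lemma refl: "le x x"
  using additive_poset unfolding additive_poset_def by blast

lemma antisym: "le x y \<Longrightarrow> le y x \<Longrightarrow> x = y"
  using additive_poset unfolding additive_poset_def by blast

lemma trans: "le x y \<Longrightarrow> le y z \<Longrightarrow> le x z"
  using additive_poset unfolding additive_poset_def by blast

lemma add_le: "le b a \<Longrightarrow> le c a \<Longrightarrow> le (b + c) a"
  using additive_poset unfolding additive_poset_def by blast

lemma le_add_add: "le a b \<Longrightarrow> le a c \<Longrightarrow> le a (a + b + c)"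
  using additive_poset unfolding additive_poset_def by blast

lemma sum_list_le: "xs \<noteq> [] \<Longrightarrow> \<forall>x\<in>set xs. le x a \<Longrightarrow> le (sum_list xs) a"
proof (induction xs)
  case (Cons x xs)
  then show ?case by (cases "xs = []") (auto intro: add_le)
qed simp

lemma sum_replicate_le: "n \<ge> 1 \<Longrightarrow> le (sum_list (replicate n a)) a"
  by (rule sum_list_le) (auto simp: refl)

end

lemma finite_group_sum_replicate_eq_zero:
  fixes a :: "'a::{ab_group_add,finite}"
  shows "\<exists>n\<ge>1. sum_list (replicate n a) = 0"
proof -
  define mult where "mult k = sum_list (replicate k a)" for k
  have "\<not> inj mult"
    using finite_imageD[of mult UNIV] by (auto simp: inj_on_def)
  then obtain i j where "i < j" "mult i = mult j"
    by (metis inj_onI linorder_neqE_nat)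
  moreover have "mult j = mult i + mult (j - i)"
    using \<open>i < j\<close> replicate_add[of i "j - i" a] by (simp add: mult_def)
  ultimately show ?thesis
    by (intro exI[of _ "j - i"]) (simp add: mult_def)
qed

lemma nth_pairwise_append:
  assumes "\<forall>i<length ys. \<forall>j<length ys. i \<noteq> j \<longrightarrow> R (ys ! i) (ys ! j)"
    and "\<forall>i<length zs. \<forall>j<length zs. i \<noteq> j \<longrightarrow> R (zs ! i) (zs ! j)"
    and "\<forall>y\<in>set ys. \<forall>z\<in>set zs. R y z \<and> R z y"
  shows "\<forall>i<length (ys @ zs). \<forall>j<length (ys @ zs). i \<noteq> j \<longrightarrow> R ((ys @ zs) ! i) ((ys @ zs) ! j)"
  using assms by (auto simp: nth_append)

locale finite_additive_order = additive_order le
  for le :: "'a::{ab_group_add,finite} \<Rightarrow> 'a \<Rightarrow> bool"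
begin

lemma minus_le: "le (- a) a"
proof -
  obtain n where "n \<ge> 1" and period: "sum_list (replicate n a) = 0"
    using finite_group_sum_replicate_eq_zero by blast
  have "- a = sum_list (replicate (n - 1) a)"
    using \<open>n \<ge> 1\<close> period replicate_Suc[of "n - 1" a] by (simp add: neg_eq_iff_add_eq_0)
  also have "\<dots> = sum_list (replicate (n - 1 + n) a)"
    by (simp add: replicate_add period)
  finally show ?thesis
    using sum_replicate_le[of "n - 1 + n" a] \<open>n \<ge> 1\<close> by simp
qed

lemma add_self: "(a::'a) + a = 0"
proof -
  have "le a (- a)"
    using minus_le[of "- a"] by simp
  then have "- a = a"
    using antisym minus_le by blast
  then show ?thesis
    by (metis add.right_inverse)
qed

lemma add_cancel_left: "(a::'a) + (a + b) = b"
  by (simp add: add.assoc[symmetric] add_self)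

lemma zero_le: "le 0 a"
  using add_le[OF refl refl, of a] by (simp add: add_self)

lemma independent_sym: "independent le x y \<Longrightarrow> independent le y x"
  using add_le[OF _ refl, of x "x + y"] by (simp add: independent_def add_cancel_left add.commute)

lemma independent_mono:
  assumes "le y b" and "independent le b c"
  shows "independent le y c"
proof -
  have "le y (b + c)"
    using assms trans unfolding independent_def by blast
  then have "le y (y + b + (b + c))"
    using le_add_add[OF \<open>le y b\<close>] by blast
  then show ?thesis
    by (simp add: independent_def add.assoc add_cancel_left)
qed

lemma independent_sum:
  "finite S \<Longrightarrow> \<forall>j\<in>S. independent le x (f j) \<Longrightarrow> independent le x (sum f S)"
proof (induction S rule: finite_induct)
  case empty
  then show ?case by (simp add: independent_def refl)
next
  case (insert j S)
  then have "le x (x + (x + f j) + (x + sum f S))"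
    by (intro le_add_add) (auto simp: independent_def)
  then show ?case
    using insert.hyps by (simp add: independent_def add_cancel_left ac_simps)
qed

lemma card_tail_less:
  assumes "le x a" "x \<noteq> a"
  shows "card (tail le x) < card (tail le a)"
proof (rule psubset_card_mono)
  have "tail le x \<subseteq> tail le a"
    using assms(1) trans by (auto simp: tail_def)
  moreover have "a \<in> tail le a - tail le x"
    using assms antisym refl by (auto simp: tail_def)
  ultimately show "tail le x \<subset> tail le a"
    by blast
qed simp

lemma atom_expansion_subset_tail:
  assumes "atom_expansion le xs a"
  shows "set xs \<subseteq> tail le a"
proof
  fix x assume "x \<in> set xs"
  then obtain i where i: "i < length xs" "xs ! i = x"
    by (auto simp: in_set_conv_nth)
  let ?others = "{0..<length xs} - {i}"
  have "independent le x (xs ! j)" if "j \<in> ?others" for j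
    using assms i that unfolding atom_expansion_def by (metis DiffE atLeastLessThan_iff singletonI)
  then have "independent le x (\<Sum>j\<in>?others. xs ! j)"
    by (simp add: independent_sum)
  moreover have "a = x + (\<Sum>j\<in>?others. xs ! j)"
    using assms i by (simp add: atom_expansion_def sum_list_sum_nth sum.remove[of _ i])
  ultimately show "x \<in> tail le a"
    by (simp add: independent_def tail_def)
qed

lemma atom_expansion_append:
  assumes ys: "atom_expansion le ys b" and zs: "atom_expansion le zs c"
    and "independent le b c"
  shows "atom_expansion le (ys @ zs) (b + c)"
proof -
  have "independent le y z \<and> independent le z y" if "y \<in> set ys" "z \<in> set zs" for y z
  proof -
    have "le y b" "le z c"
      using that atom_expansion_subset_tail[OF ys] atom_expansion_subset_tail[OF zs]
      by (auto simp: tail_def)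
    have "independent le c y"
      by (rule independent_sym[OF independent_mono[OF \<open>le y b\<close> \<open>independent le b c\<close>]])
    then have "independent le z y"
      by (rule independent_mono[OF \<open>le z c\<close>])
    then show ?thesis
      using independent_sym[of z y] by simp
  qed
  then have "\<forall>i<length (ys @ zs). \<forall>j<length (ys @ zs). i \<noteq> j \<longrightarrow>
      independent le ((ys @ zs) ! i) ((ys @ zs) ! j)"
    using ys zs unfolding atom_expansion_def by (intro nth_pairwise_append) auto
  then show ?thesis
    using ys zs unfolding atom_expansion_def by auto
qed

lemma atom_expansion_exists: "a \<noteq> 0 \<Longrightarrow> \<exists>xs. atom_expansion le xs a"
proof (induction "card (tail le a)" arbitrary: a rule: less_induct)
  case less
  show ?case
  proof (cases "atom le a")
    case True
    then show ?thesis by (intro exI[of _ "[a]"]) (simp add: atom_expansion_def)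
  next
    case False
    then obtain b where b: "le b a" "b \<noteq> 0" "b \<noteq> a"
      using less.prems zero_le refl by (auto simp: atom_def tail_def)
    define c where "c = a + b"
    have a: "a = b + c"
      by (simp add: c_def add.left_commute[of b a] add_self)
    have "le c a"
      using add_le[OF refl b(1)] by (simp add: c_def)
    have "c \<noteq> 0" "c \<noteq> a"
      using a b(2,3) by auto
    obtain ys zs where "atom_expansion le ys b" "atom_expansion le zs c"
      using less.hyps[OF card_tail_less[OF b(1,3)] b(2)]
        less.hyps[OF card_tail_less[OF \<open>le c a\<close> \<open>c \<noteq> a\<close>] \<open>c \<noteq> 0\<close>] by blast
    moreover have "independent le b c"
      using b(1) a by (simp add: independent_def)
    ultimately show ?thesis
      using atom_expansion_append a by blast
  qed
qed

end

theorem theorem6p3: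
  fixes le :: "'a::{ab_group_add, finite} \<Rightarrow> 'a \<Rightarrow> bool" and a :: 'a
  assumes "additive_poset le" and "a \<noteq> 0"
  shows "(\<exists>xs. atom_expansion le xs a) \<and>
         (\<forall>xs. atom_expansion le xs a \<longrightarrow> set xs \<subseteq> tail le a)"
proof -
  interpret finite_additive_order le
    using assms(1) by unfold_locales
  show ?thesis
    using atom_expansion_exists[OF assms(2)] atom_expansion_subset_tail by blast
qed

end
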